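(* Let $\lambda=[\lambda_1,\ldots,\lambda_s]$ and $\mu=[\mu_1,\ldots,\mu_t]$ be integral partitions such that $\lambda_i\mid\lambda_j$ whenever $i\ge j$. Suppose $\lambda\hookrightarrow\mu$. Then the first fit procedure always succeeds: if one processes $\lambda_1,\lambda_2,\ldots,\lambda_s$ in this order and places each $\lambda_i$ into any bin $j$ whose remaining capacity (namely $\mu_j$ minus the sum of the $\lambda$'s already placed in bin $j$) is at least $\lambda_i$, then, whatever such choices are made, at each step there exists a bin with remaining capacity at least the current $\lambda_i$, so all of $\lambda$ gets placed. Equivalently: for every $k$ with $\lambda_1\le\mu_k$, the sequence $[\lambda_2,\ldots,\lambda_s]$ embeds into the sequence of capacities obtained from $\mu$ by replacing $\mu_k$ with $\mu_k-\lambda_1$.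
   Context: An integral partition is a finite nonincreasing sequence of positive integers. $\lambda=[\lambda_1,\ldots,\lambda_m]$ embeds into a sequence of nonnegative integer capacities $\mu=[\mu_1,\ldots,\mu_n]$, written $\lambda\hookrightarrow\mu$, if there is a map $\varphi:\{1,\ldots,m\}\to\{1,\ldots,n\}$ with $\sum_{i\in\varphi^{-1}(j)}\lambda_i\le\mu_j$ for all $j$. *)

theory Defs
  imports Main
begin

text \<open>Integral partitions are lists of positive naturals, nonincreasing. Indices are 0-based.\<close>
definition integral_partition :: "nat list \<Rightarrow> bool" where
  "integral_partition xs \<longleftrightarrow> (\<forall>x\<in>set xs. 0 < x) \<and> sorted_wrt (\<ge>) xs"

definition load :: "nat list \<Rightarrow> (nat \<Rightarrow> nat) \<Rightarrow> nat \<Rightarrow> nat \<Rightarrow> nat" where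
  "load lam phi n j = (\<Sum>i | i < n \<and> phi i = j. lam ! i)"

definition embeds :: "nat list \<Rightarrow> nat list \<Rightarrow> bool" where
  "embeds lam mu \<longleftrightarrow> (\<exists>phi. (\<forall>i < length lam. phi i < length mu) \<and>
      (\<forall>j < length mu. load lam phi (length lam) j \<le> mu ! j))"

definition first_fit_run :: "nat list \<Rightarrow> nat list \<Rightarrow> (nat \<Rightarrow> nat) \<Rightarrow> nat \<Rightarrow> bool" where
  "first_fit_run lam mu phi n \<longleftrightarrow> (\<forall>l < n. phi l < length mu \<and>
      lam ! l + load lam phi l (phi l) \<le> mu ! (phi l))"

end

(*
  The heart is an exchange argument. Let an embedding put the first part x into bin p, and let
  k be any other bin with room for x. The later parts sitting in bin k all divide x and form a
  divisor chain, so either they already fit into bin k next to x, or some of them add up to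
  exactly x (greedily: the smallest part divides all others). Swapping these parts with x
  yields an embedding that puts x into bin k. Consequently, after any partial first-fit run
  the remaining parts still embed into the residual capacities, so the next part finds a bin.
*)
theory Submission
  imports Defs
begin

definition divisor_chain :: "nat list \<Rightarrow> bool" where
  "divisor_chain xs \<longleftrightarrow> (\<forall>i < length xs. \<forall>j \<le> i. xs ! i dvd xs ! j)"

lemma divisor_chain_drop: "divisor_chain xs \<Longrightarrow> divisor_chain (drop n xs)"
  unfolding divisor_chain_def by auto

lemma divisor_chain_ConsD:
  assumes "divisor_chain (x # xs)"
  shows "divisor_chain xs" and "\<And>y. y \<in> set xs \<Longrightarrow> y dvd x"
proof -
  show "divisor_chain xs" using divisor_chain_drop[OF assms, of 1] by simp
  show "y dvd x" if "y \<in> set xs" for y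
  proof -
    obtain i where "i < length xs" "y = xs ! i"
      using \<open>y \<in> set xs\<close> by (auto simp: in_set_conv_nth)
    then show ?thesis
      using assms unfolding divisor_chain_def
      by (metis Suc_less_eq le0 length_Cons nth_Cons_0 nth_Cons_Suc)
  qed
qed

lemma exists_subset_sum_eq:
  fixes f :: "'a::linorder \<Rightarrow> nat"
  assumes "finite B"
    and "\<And>x y. x \<in> B \<Longrightarrow> y \<in> B \<Longrightarrow> x \<le> y \<Longrightarrow> f y dvd f x"
    and "\<And>x. x \<in> B \<Longrightarrow> f x dvd D"
    and "D \<le> sum f B"
  shows "\<exists>S \<subseteq> B. sum f S = D"
  using assms
proof (induction B rule: finite_linorder_max_induct)
  case empty
  then show ?case by simp
next
  case (insert b A)
  show ?case
  proof (cases "D \<le> sum f A")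
    case True
    then show ?thesis using insert by (metis insert_iff subset_insertI2)
  next
    case False
    \<comment> \<open>D and the sum over insert b A are multiples of f b that differ by less than f b.\<close>
    have "f b dvd sum f A"
      using insert.hyps(2) insert.prems(1) by (intro dvd_sum) (simp add: less_imp_le)
    then obtain r where r: "sum f A = f b * r" by blast
    obtain q where q: "D = f b * q" using insert.prems(2) by blast
    have "b \<notin> A" using insert.hyps(2) by blast
    then have total: "sum f (insert b A) = f b * Suc r"
      using insert.hyps(1) r by simp
    have "r < q" using False q r by (metis mult_le_mono2 not_le_imp_less)
    moreover have "q \<le> Suc r"
      using insert.prems(3) False q r total by (metis mult_le_cancel1)
    ultimately have "q = Suc r" by simp
    then have "sum f (insert b A) = D" using q total by simp
    then show ?thesis by blast
  qed
qed

lemma load_eq_sum_lessThan: "load lam phi n j = (\<Sum>i<n. if phi i = j then lam ! i else 0)"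
  using sum.inter_filter[of "{..<n}" "nth lam" "\<lambda>i. phi i = j"] unfolding load_def by simp

lemma load_Suc: "load lam phi (Suc n) j = load lam phi n j + (if phi n = j then lam ! n else 0)"
  by (simp add: load_eq_sum_lessThan)

lemma load_Cons:
  "load (x # xs) phi (Suc n) j = (if phi 0 = j then x else 0) + load xs (\<lambda>i. phi (Suc i)) n j"
  unfolding load_eq_sum_lessThan sum.lessThan_Suc_shift by (simp cong: if_cong)

lemma embeds_Cons_iff:
  "embeds (x # xs) mu \<longleftrightarrow> (\<exists>j < length mu. x \<le> mu ! j \<and> embeds xs (mu[j := mu ! j - x]))"
proof
  assume "embeds (x # xs) mu"
  then obtain phi where range: "\<forall>i < Suc (length xs). phi i < length mu"
    and fits: "\<forall>j < length mu. load (x # xs) phi (Suc (length xs)) j \<le> mu ! j"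
    unfolding embeds_def by auto
  define p where "p = phi 0"
  have p: "p < length mu" using range unfolding p_def by blast
  have fits': "(if p = j then x else 0) + load xs (\<lambda>i. phi (Suc i)) (length xs) j \<le> mu ! j"
    if "j < length mu" for j
    using fits that unfolding p_def by (simp add: load_Cons)
  have "x \<le> mu ! p" using fits'[OF p] by simp
  moreover have "embeds xs (mu[p := mu ! p - x])"
    unfolding embeds_def
  proof (intro exI conjI allI impI)
    show "phi (Suc i) < length (mu[p := mu ! p - x])" if "i < length xs" for i
      using range that by simp
    show "load xs (\<lambda>i. phi (Suc i)) (length xs) j \<le> mu[p := mu ! p - x] ! j"
      if "j < length (mu[p := mu ! p - x])" for j
      using fits'[of j] that by (cases "j = p") auto
  qed
  ultimately show "\<exists>j < length mu. x \<le> mu ! j \<and> embeds xs (mu[j := mu ! j - x])"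
    using p by blast
next
  assume "\<exists>j < length mu. x \<le> mu ! j \<and> embeds xs (mu[j := mu ! j - x])"
  then obtain j psi where j: "j < length mu" "x \<le> mu ! j"
    and range: "\<forall>i < length xs. psi i < length mu"
    and fits: "\<forall>j' < length mu. load xs psi (length xs) j' \<le> mu[j := mu ! j - x] ! j'"
    unfolding embeds_def by auto
  show "embeds (x # xs) mu"
    unfolding embeds_def
  proof (intro exI conjI allI impI)
    show "case_nat j psi i < length mu" if "i < length (x # xs)" for i
      using that j range by (cases i) auto
    show "load (x # xs) (case_nat j psi) (length (x # xs)) j' \<le> mu ! j'"
      if "j' < length mu" for j'
      using that j fits[rule_format, of j'] by (cases "j' = j") (auto simp: load_Cons)
  qed
qed

lemma load_redirect:
  assumes "S \<subseteq> {i. i < n \<and> phi i = k}" and "p \<noteq> k"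
  shows "load lam (\<lambda>i. if i \<in> S then p else phi i) n k = load lam phi n k - sum (nth lam) S"
    and "load lam (\<lambda>i. if i \<in> S then p else phi i) n p = load lam phi n p + sum (nth lam) S"
    and "j \<noteq> k \<Longrightarrow> j \<noteq> p \<Longrightarrow>
      load lam (\<lambda>i. if i \<in> S then p else phi i) n j = load lam phi n j"
proof -
  have fin: "finite S" by (rule finite_subset[OF assms(1)]) simp
  have "{i. i < n \<and> (if i \<in> S then p else phi i) = k} = {i. i < n \<and> phi i = k} - S"
    using assms by auto
  then show "load lam (\<lambda>i. if i \<in> S then p else phi i) n k = load lam phi n k - sum (nth lam) S"
    unfolding load_def using sum_diff_nat[OF fin assms(1)] by simp
  have "{i. i < n \<and> (if i \<in> S then p else phi i) = p} = {i. i < n \<and> phi i = p} \<union> S"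
    and "{i. i < n \<and> phi i = p} \<inter> S = {}"
    using assms by auto
  then show "load lam (\<lambda>i. if i \<in> S then p else phi i) n p = load lam phi n p + sum (nth lam) S"
    unfolding load_def using fin by (simp add: sum.union_disjoint)
  show "load lam (\<lambda>i. if i \<in> S then p else phi i) n j = load lam phi n j"
    if "j \<noteq> k" "j \<noteq> p"
  proof -
    have "{i. i < n \<and> (if i \<in> S then p else phi i) = j} = {i. i < n \<and> phi i = j}"
      using assms that by auto
    then show ?thesis unfolding load_def by simp
  qed
qed

lemma embeds_Cons_into_any_bin:
  assumes chain: "divisor_chain (x # xs)" and emb: "embeds (x # xs) mu"
    and k: "k < length mu" and x_fits: "x \<le> mu ! k"
  shows "embeds xs (mu[k := mu ! k - x])"
proof -
  obtain p where p: "p < length mu" "x \<le> mu ! p" and emb_p: "embeds xs (mu[p := mu ! p - x])"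
    using emb embeds_Cons_iff by blast
  show ?thesis
  proof (cases "p = k")
    case True
    then show ?thesis using emb_p by simp
  next
    case p_ne_k: False
    obtain psi where range: "\<forall>i < length xs. psi i < length mu"
      and fits: "\<forall>j < length mu. load xs psi (length xs) j \<le> mu[p := mu ! p - x] ! j"
      using emb_p unfolding embeds_def by auto
    define B where "B = {i. i < length xs \<and> psi i = k}"
    have load_k: "load xs psi (length xs) k = sum (nth xs) B"
      unfolding B_def load_def ..
    have "load xs psi (length xs) k \<le> mu ! k"
      using fits k p_ne_k by auto
    \<comment> \<open>Parts S of bin k to swap with x: few enough to fit where x was, enough to make room
      for x in bin k.\<close>
    obtain S where S: "S \<subseteq> B" "load xs psi (length xs) k - (mu ! k - x) \<le> sum (nth xs) S"
      "sum (nth xs) S \<le> x"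
    proof (cases "sum (nth xs) B \<le> x")
      case True
      then show ?thesis using that[of B] load_k by simp
    next
      case False
      have "\<exists>S \<subseteq> B. sum (nth xs) S = x"
      proof (rule exists_subset_sum_eq)
        show "finite B" unfolding B_def by simp
        show "xs ! b dvd xs ! a" if "a \<in> B" "b \<in> B" "a \<le> b" for a b
          using divisor_chain_ConsD(1)[OF chain] that unfolding divisor_chain_def B_def by auto
        show "xs ! a dvd x" if "a \<in> B" for a
          using divisor_chain_ConsD(2)[OF chain] that unfolding B_def by simp
        show "x \<le> sum (nth xs) B" using False by simp
      qed
      then show ?thesis
        using that \<open>load xs psi (length xs) k \<le> mu ! k\<close> x_fits by auto
    qed
    have S_bin_k: "S \<subseteq> {i. i < length xs \<and> psi i = k}" using S(1) unfolding B_def .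
    show ?thesis
      unfolding embeds_def
    proof (intro exI conjI allI impI)
      show "(if i \<in> S then p else psi i) < length (mu[k := mu ! k - x])"
        if "i < length xs" for i
        using range p that by simp
      show "load xs (\<lambda>i. if i \<in> S then p else psi i) (length xs) j \<le> mu[k := mu ! k - x] ! j"
        if "j < length (mu[k := mu ! k - x])" for j
        using that fits S p x_fits load_redirect[OF S_bin_k p_ne_k, where lam = xs]
        by (cases "j = k"; cases "j = p") auto
    qed
  qed
qed

definition residual_capacities ::
    "nat list \<Rightarrow> nat list \<Rightarrow> (nat \<Rightarrow> nat) \<Rightarrow> nat \<Rightarrow> nat list" where
  "residual_capacities lam mu phi n = map (\<lambda>j. mu ! j - load lam phi n j) [0..<length mu]"

lemma residual_capacities_0: "residual_capacities lam mu phi 0 = mu"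
  by (rule nth_equalityI) (simp_all add: residual_capacities_def load_def)

lemma residual_capacities_Suc:
  "residual_capacities lam mu phi (Suc n) =
     (residual_capacities lam mu phi n)[phi n := residual_capacities lam mu phi n ! phi n - lam ! n]"
  by (rule nth_equalityI) (auto simp: residual_capacities_def load_Suc nth_list_update)

lemma first_fit_run_SucD: "first_fit_run lam mu phi (Suc n) \<Longrightarrow> first_fit_run lam mu phi n"
  unfolding first_fit_run_def by simp

lemma embeds_residual_capacities:
  assumes "divisor_chain lam" and "embeds lam mu"
  shows "first_fit_run lam mu phi n \<Longrightarrow> n \<le> length lam \<Longrightarrow>
    embeds (drop n lam) (residual_capacities lam mu phi n)"
proof (induction n)
  case 0
  then show ?case using assms(2) by (simp add: residual_capacities_0)
next
  case (Suc n)
  have IH: "embeds (lam ! n # drop (Suc n) lam) (residual_capacities lam mu phi n)"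
    using Suc first_fit_run_SucD by (simp add: Cons_nth_drop_Suc)
  have "phi n < length mu" and "lam ! n + load lam phi n (phi n) \<le> mu ! phi n"
    using Suc.prems(1) unfolding first_fit_run_def by auto
  then have "lam ! n \<le> residual_capacities lam mu phi n ! phi n"
    by (simp add: residual_capacities_def)
  moreover have "divisor_chain (lam ! n # drop (Suc n) lam)"
    using divisor_chain_drop[OF assms(1), of n] Suc.prems(2) by (simp add: Cons_nth_drop_Suc)
  ultimately show ?case
    unfolding residual_capacities_Suc
    using embeds_Cons_into_any_bin[OF _ IH] \<open>phi n < length mu\<close>
    by (simp add: residual_capacities_def)
qed

theorem theorem3p1:
  fixes lam mu :: "nat list"
  assumes "integral_partition lam" and "integral_partition mu"
    and "\<And>i j. i < length lam \<Longrightarrow> j \<le> i \<Longrightarrow> lam ! i dvd lam ! j"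
    and "embeds lam mu"
  shows "(\<forall>n < length lam. \<forall>phi. first_fit_run lam mu phi n \<longrightarrow>
            (\<exists>j < length mu. lam ! n + load lam phi n j \<le> mu ! j))
       \<and> (lam \<noteq> [] \<longrightarrow> (\<forall>k < length mu. lam ! 0 \<le> mu ! k \<longrightarrow>
            embeds (tl lam) (mu[k := mu ! k - lam ! 0])))"
proof -
  have chain: "divisor_chain lam" using assms(3) unfolding divisor_chain_def by blast
  show ?thesis
  proof (intro conjI allI impI)
    fix n phi assume n: "n < length lam" and run: "first_fit_run lam mu phi n"
    have "embeds (lam ! n # drop (Suc n) lam) (residual_capacities lam mu phi n)"
      using embeds_residual_capacities[OF chain assms(4) run] n by (simp add: Cons_nth_drop_Suc)
    then obtain j where "j < length mu" and "lam ! n \<le> mu ! j - load lam phi n j"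
      by (auto simp: embeds_Cons_iff residual_capacities_def)
    \<comment> \<open>Positivity undoes the truncated subtraction; it is all that is used of the partition
      hypotheses.\<close>
    moreover have "0 < lam ! n" using assms(1) n unfolding integral_partition_def by simp
    ultimately show "\<exists>j < length mu. lam ! n + load lam phi n j \<le> mu ! j" by auto
  next
    fix k assume "lam \<noteq> []" and "k < length mu" and "lam ! 0 \<le> mu ! k"
    moreover from \<open>lam \<noteq> []\<close> have "lam = lam ! 0 # tl lam" by (cases lam) auto
    ultimately show "embeds (tl lam) (mu[k := mu ! k - lam ! 0])"
      using embeds_Cons_into_any_bin[of "lam ! 0" "tl lam"] chain assms(4) by metis
  qed
qed

end
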